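(* Let $N\ge1$, $0=\tau_0<\cdots<\tau_N=1$, $\Delta_i=\tau_{i+1}-\tau_i$, $D_2=\sum_i\Delta_i^2$, $0<\omega<1/N$ and $\mathcal W_\omega=\{w\in\mathbb R^N:w_i\ge\omega\ \forall i,\ \sum_iw_i=1\}$. Fix $\varepsilon_a>0$, nonnegative weights $K_\sigma(i,\ell)$ with $\sum_\ell K_\sigma(i,\ell)=1$, numbers $\widehat{\mathcal A}_i\ge0$ and $\mathcal A_i\ge0$. Define $\widehat b_i=\sum_\ell K_\sigma(i,\ell)\sqrt{\widehat{\mathcal A}_\ell+\varepsilon_a}$, $\widehat\phi_i=\widehat b_i^2$, $\widehat w_i=\Delta_i\widehat b_i/\sum_\ell\Delta_\ell\widehat b_\ell$, $b_i^\star=\sum_\ell K_\sigma(i,\ell)\sqrt{\mathcal A_\ell+\varepsilon_a}$, $\phi_i^\star=(b_i^\star)^2$, $\mathcal J(w)=\sum_i\mathcal A_i\Delta_i^2/w_i$, $\mathcal J_{\sigma,\varepsilon_a}(w)=\sum_i\phi_i^\star\Delta_i^2/w_i$, $\beta_{\sigma,\varepsilon_a}=\max_i|\phi_i^\star-\mathcal A_i|$, and let $w^\star\in\arg\min_{w\in\mathcal W_\omega}\mathcal J(w)$. Then for every $w\in\mathcal W_\omega$, $$|\mathcal J_{\sigma,\varepsilon_a}(w)-\mathcal J(w)|\le\frac{D_2}{\omega}\beta_{\sigma,\varepsilon_a}.$$ Consequently, if moreover $\widehat w\in\mathcal W_\omega$, $\zeta\ge0$, and $\max_i|\widehat\phi_i-\phi_i^\star|\le\zeta$,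 then $$\mathcal J(\widehat w)\le\mathcal J(w^\star)+\frac{2D_2}{\omega}\bigl(\zeta+\beta_{\sigma,\varepsilon_a}\bigr).$$ *)

theory Defs
  imports Complex_Main
begin

text \<open>Indices run over 0..N-1; vectors in R^N are functions nat => real,
  only their values at i < N matter.\<close>

definition Delta :: "(nat \<Rightarrow> real) \<Rightarrow> nat \<Rightarrow> real" where
  "Delta \<tau> i = \<tau> (Suc i) - \<tau> i"

definition D2 :: "nat \<Rightarrow> (nat \<Rightarrow> real) \<Rightarrow> real" where
  "D2 N \<tau> = (\<Sum>i<N. (Delta \<tau> i)^2)"

definition Wset :: "nat \<Rightarrow> real \<Rightarrow> (nat \<Rightarrow> real) set" where
  "Wset N \<omega> = {w. (\<forall>i<N. \<omega> \<le> w i) \<and> (\<Sum>i<N. w i) = 1}"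

definition bvec :: "nat \<Rightarrow> (nat \<Rightarrow> nat \<Rightarrow> real) \<Rightarrow> (nat \<Rightarrow> real) \<Rightarrow> real \<Rightarrow> nat \<Rightarrow> real" where
  "bvec N K A \<epsilon> i = (\<Sum>l<N. K i l * sqrt (A l + \<epsilon>))"

definition phivec :: "nat \<Rightarrow> (nat \<Rightarrow> nat \<Rightarrow> real) \<Rightarrow> (nat \<Rightarrow> real) \<Rightarrow> real \<Rightarrow> nat \<Rightarrow> real" where
  "phivec N K A \<epsilon> i = (bvec N K A \<epsilon> i)^2"

definition wvec :: "nat \<Rightarrow> (nat \<Rightarrow> real) \<Rightarrow> (nat \<Rightarrow> nat \<Rightarrow> real) \<Rightarrow> (nat \<Rightarrow> real) \<Rightarrow> real \<Rightarrow> nat \<Rightarrow> real" where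
  "wvec N \<tau> K A \<epsilon> i =
     Delta \<tau> i * bvec N K A \<epsilon> i / (\<Sum>l<N. Delta \<tau> l * bvec N K A \<epsilon> l)"

definition Jfun :: "nat \<Rightarrow> (nat \<Rightarrow> real) \<Rightarrow> (nat \<Rightarrow> real) \<Rightarrow> (nat \<Rightarrow> real) \<Rightarrow> real" where
  "Jfun N \<tau> c w = (\<Sum>i<N. c i * (Delta \<tau> i)^2 / w i)"

definition beta :: "nat \<Rightarrow> (nat \<Rightarrow> nat \<Rightarrow> real) \<Rightarrow> (nat \<Rightarrow> real) \<Rightarrow> real \<Rightarrow> real" where
  "beta N K A \<epsilon> = Max ((\<lambda>i. \<bar>phivec N K A \<epsilon> i - A i\<bar>) ` {..<N})"

end

theory Submission
  imports Defs
begin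

text \<open>Changing the coefficients of \<open>J\<close> by at most \<open>M\<close> changes each term \<open>c\<^sub>i \<Delta>\<^sub>i\<^sup>2 / w\<^sub>i\<close> by at most
  \<open>M \<Delta>\<^sub>i\<^sup>2 / \<omega>\<close>, which gives the first bound. For the second, \<open>\<hat>w\<close> is the exact minimiser over
  the simplex of the surrogate objective with coefficients \<open>\<hat>\<phi>\<^sub>i = \<hat>b\<^sub>i\<^sup>2\<close>: by Cauchy-Schwarz
  \<open>(\<Sum> \<Delta>\<^sub>i \<hat>b\<^sub>i)\<^sup>2 \<le> \<Sum> \<Delta>\<^sub>i\<^sup>2 \<hat>b\<^sub>i\<^sup>2 / w\<^sub>i\<close>, with equality for \<open>w \<propto> \<Delta> \<hat>b\<close>. Since \<open>|\<hat>\<phi>\<^sub>i - A\<^sub>i| \<le> \<zeta> + \<beta>\<close>,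
  passing from \<open>J\<close> to the surrogate and back at \<open>\<hat>w\<close> and at \<open>w\<^sup>\<star>\<close> costs twice \<open>D\<^sub>2 (\<zeta> + \<beta>) / \<omega>\<close>.\<close>

lemma abs_Jfun_diff_le:
  assumes om: "0 < \<omega>" and w: "\<forall>i<N. \<omega> \<le> w i"
    and M: "\<forall>i<N. \<bar>c i - d i\<bar> \<le> M"
  shows "\<bar>Jfun N \<tau> c w - Jfun N \<tau> d w\<bar> \<le> D2 N \<tau> / \<omega> * M"
proof -
  have "Jfun N \<tau> c w - Jfun N \<tau> d w = (\<Sum>i<N. (c i - d i) * (Delta \<tau> i)^2 / w i)"
    unfolding Jfun_def by (simp add: sum_subtractf[symmetric] diff_divide_distrib left_diff_distrib)
  also have "\<bar>\<dots>\<bar> \<le> (\<Sum>i<N. \<bar>(c i - d i) * (Delta \<tau> i)^2 / w i\<bar>)"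
    by (rule sum_abs)
  also have "\<dots> \<le> (\<Sum>i<N. M * ((Delta \<tau> i)^2 / \<omega>))"
  proof (rule sum_mono)
    fix i assume "i \<in> {..<N}"
    then have i: "i < N" by simp
    have wi: "w i > 0" using w om i by force
    have "\<bar>(c i - d i) * (Delta \<tau> i)^2 / w i\<bar> = \<bar>c i - d i\<bar> * ((Delta \<tau> i)^2 / w i)"
      using wi by (simp add: abs_mult)
    also have "\<dots> \<le> M * ((Delta \<tau> i)^2 / \<omega>)"
    proof (rule mult_mono)
      show "\<bar>c i - d i\<bar> \<le> M" using M i by auto
      show "(Delta \<tau> i)^2 / w i \<le> (Delta \<tau> i)^2 / \<omega>"
        using w i om by (intro divide_left_mono) auto
      show "0 \<le> M" using M i by (meson abs_ge_zero order_trans)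
      show "0 \<le> (Delta \<tau> i)^2 / w i" using wi by simp
    qed
    finally show "\<bar>(c i - d i) * (Delta \<tau> i)^2 / w i\<bar> \<le> M * ((Delta \<tau> i)^2 / \<omega>)" .
  qed
  also have "\<dots> = D2 N \<tau> / \<omega> * M"
    unfolding D2_def by (simp add: sum_distrib_left[symmetric] sum_divide_distrib[symmetric] algebra_simps)
  finally show ?thesis .
qed

lemma square_sum_le_sum_square_div_weight:
  fixes x w :: "nat \<Rightarrow> real"
  assumes w: "\<forall>i<N. w i > 0" and w_sum: "(\<Sum>i<N. w i) = 1"
  shows "(\<Sum>i<N. x i)^2 \<le> (\<Sum>i<N. (x i)^2 / w i)"
proof -
  define S where "S = (\<Sum>i<N. x i)"
  \<comment> \<open>tangent-line bound \<open>x\<^sup>2 / w \<ge> 2 S x - S\<^sup>2 w\<close>, i.e. \<open>(x - S w)\<^sup>2 \<ge> 0\<close>\<close>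
  have "(\<Sum>i<N. 2 * S * x i - S^2 * w i) \<le> (\<Sum>i<N. (x i)^2 / w i)"
  proof (rule sum_mono)
    fix i assume "i \<in> {..<N}"
    then have wi: "w i > 0" using w by auto
    have "0 \<le> (x i - S * w i)^2" by simp
    then have "(2 * S * x i - S^2 * w i) * w i \<le> (x i)^2"
      by (simp add: power2_eq_square algebra_simps)
    then show "2 * S * x i - S^2 * w i \<le> (x i)^2 / w i"
      using wi by (simp add: pos_le_divide_eq)
  qed
  moreover have "(\<Sum>i<N. 2 * S * x i - S^2 * w i) = S^2"
    by (simp add: sum_subtractf sum_distrib_left[symmetric] w_sum S_def power2_eq_square)
  ultimately show ?thesis unfolding S_def by simp
qed

lemma sum_square_div_proportional_weight:
  fixes x :: "nat \<Rightarrow> real"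
  assumes x: "\<forall>i<N. x i > 0"
  shows "(\<Sum>i<N. (x i)^2 / (x i / (\<Sum>l<N. x l))) = (\<Sum>i<N. x i)^2"
proof -
  define S where "S = (\<Sum>l<N. x l)"
  have "(x i)^2 / (x i / S) = S * x i" if "i < N" for i
    using x that by (simp add: power2_eq_square)
  then have "(\<Sum>i<N. (x i)^2 / (x i / S)) = (\<Sum>i<N. S * x i)"
    by (intro sum.cong) auto
  also have "\<dots> = S^2" by (simp add: sum_distrib_left[symmetric] S_def power2_eq_square)
  finally show ?thesis unfolding S_def .
qed

lemma bvec_ge_sqrt:
  assumes K_nonneg: "\<forall>l<N. K i l \<ge> 0" and K_sum: "(\<Sum>l<N. K i l) = 1"
    and A_nonneg: "\<forall>l<N. A l \<ge> 0"
  shows "sqrt \<epsilon> \<le> bvec N K A \<epsilon> i"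
proof -
  have "sqrt \<epsilon> = (\<Sum>l<N. K i l * sqrt \<epsilon>)"
    using K_sum by (simp add: sum_distrib_right[symmetric])
  also have "\<dots> \<le> bvec N K A \<epsilon> i"
    unfolding bvec_def using K_nonneg A_nonneg by (intro sum_mono mult_left_mono) auto
  finally show ?thesis .
qed

lemma wvec_minimises_Jfun_phivec:
  assumes Delta_pos: "\<forall>i<N. Delta \<tau> i > 0" and eps: "\<epsilon> > 0"
    and K_nonneg: "\<forall>i<N. \<forall>l<N. K i l \<ge> 0" and K_sum: "\<forall>i<N. (\<Sum>l<N. K i l) = 1"
    and A_nonneg: "\<forall>i<N. A i \<ge> 0"
    and w: "\<forall>i<N. w i > 0" and w_sum: "(\<Sum>i<N. w i) = 1"
  shows "Jfun N \<tau> (phivec N K A \<epsilon>) (wvec N \<tau> K A \<epsilon>) \<le> Jfun N \<tau> (phivec N K A \<epsilon>) w"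
proof -
  define x where "x i = Delta \<tau> i * bvec N K A \<epsilon> i" for i
  have J_eq: "Jfun N \<tau> (phivec N K A \<epsilon>) v = (\<Sum>i<N. (x i)^2 / v i)" for v
    unfolding Jfun_def phivec_def x_def by (simp add: power_mult_distrib mult.commute)
  have "\<forall>i<N. x i > 0"
    unfolding x_def using Delta_pos eps bvec_ge_sqrt[of N K _ A \<epsilon>] K_nonneg K_sum A_nonneg
    by (smt (verit) mult_pos_pos real_sqrt_gt_zero)
  then have "Jfun N \<tau> (phivec N K A \<epsilon>) (wvec N \<tau> K A \<epsilon>) = (\<Sum>i<N. x i)^2"
    using sum_square_div_proportional_weight unfolding J_eq wvec_def x_def[symmetric] by blast
  also have "\<dots> \<le> Jfun N \<tau> (phivec N K A \<epsilon>) w"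
    unfolding J_eq using square_sum_le_sum_square_div_weight[OF w w_sum] .
  finally show ?thesis .
qed

theorem lemma5:
  fixes N :: nat and \<tau> :: "nat \<Rightarrow> real" and \<omega> \<epsilon> \<zeta> :: real
    and K :: "nat \<Rightarrow> nat \<Rightarrow> real" and Ahat A wstar :: "nat \<Rightarrow> real"
  assumes N: "N \<ge> 1"
    and tau0: "\<tau> 0 = 0" and tauN: "\<tau> N = 1"
    and tau_mono: "\<forall>i<N. \<tau> i < \<tau> (Suc i)"
    and om_pos: "0 < \<omega>" and om_less: "\<omega> < 1 / real N"
    and eps: "\<epsilon> > 0"
    and K_nonneg: "\<forall>i<N. \<forall>l<N. K i l \<ge> 0"
    and K_sum: "\<forall>i<N. (\<Sum>l<N. K i l) = 1"
    and Ahat_nonneg: "\<forall>i<N. Ahat i \<ge> 0"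
    and A_nonneg: "\<forall>i<N. A i \<ge> 0"
    and wstar_in: "wstar \<in> Wset N \<omega>"
    and wstar_min: "\<forall>w \<in> Wset N \<omega>. Jfun N \<tau> A wstar \<le> Jfun N \<tau> A w"
  shows "(\<forall>w \<in> Wset N \<omega>.
            \<bar>Jfun N \<tau> (phivec N K A \<epsilon>) w - Jfun N \<tau> A w\<bar>
              \<le> D2 N \<tau> / \<omega> * beta N K A \<epsilon>)
       \<and> ((wvec N \<tau> K Ahat \<epsilon> \<in> Wset N \<omega> \<and> \<zeta> \<ge> 0
            \<and> Max ((\<lambda>i. \<bar>phivec N K Ahat \<epsilon> i - phivec N K A \<epsilon> i\<bar>) ` {..<N}) \<le> \<zeta>)
          \<longrightarrow> Jfun N \<tau> A (wvec N \<tau> K Ahat \<epsilon>)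
                \<le> Jfun N \<tau> A wstar + 2 * D2 N \<tau> / \<omega> * (\<zeta> + beta N K A \<epsilon>))"
proof -
  have beta: "\<forall>i<N. \<bar>phivec N K A \<epsilon> i - A i\<bar> \<le> beta N K A \<epsilon>"
    unfolding beta_def by (auto intro: Max_ge)
  show ?thesis
  proof (intro conjI ballI impI)
    show "\<bar>Jfun N \<tau> (phivec N K A \<epsilon>) w - Jfun N \<tau> A w\<bar> \<le> D2 N \<tau> / \<omega> * beta N K A \<epsilon>"
      if "w \<in> Wset N \<omega>" for w
      using abs_Jfun_diff_le[OF om_pos _ beta] that unfolding Wset_def by blast
  next
    let ?what = "wvec N \<tau> K Ahat \<epsilon>" and ?phat = "phivec N K Ahat \<epsilon>"
      and ?E = "D2 N \<tau> / \<omega> * (\<zeta> + beta N K A \<epsilon>)"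
    assume H: "?what \<in> Wset N \<omega> \<and> \<zeta> \<ge> 0
      \<and> Max ((\<lambda>i. \<bar>?phat i - phivec N K A \<epsilon> i\<bar>) ` {..<N}) \<le> \<zeta>"
    have total: "\<forall>i<N. \<bar>A i - ?phat i\<bar> \<le> \<zeta> + beta N K A \<epsilon>"
    proof (intro allI impI)
      fix i assume i: "i < N"
      then have "\<bar>?phat i - phivec N K A \<epsilon> i\<bar> \<le> \<zeta>"
        using H by (auto intro: order_trans[OF Max_ge])
      with beta i show "\<bar>A i - ?phat i\<bar> \<le> \<zeta> + beta N K A \<epsilon>"
        by fastforce
    qed
    have what: "\<forall>i<N. \<omega> \<le> ?what i"
      and wstar: "\<forall>i<N. \<omega> \<le> wstar i" "(\<Sum>i<N. wstar i) = 1"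
      using H wstar_in unfolding Wset_def by auto
    have "Jfun N \<tau> ?phat ?what \<le> Jfun N \<tau> ?phat wstar"
    proof (rule wvec_minimises_Jfun_phivec[OF _ eps K_nonneg K_sum Ahat_nonneg _ wstar(2)])
      show "\<forall>i<N. Delta \<tau> i > 0" using tau_mono unfolding Delta_def by auto
      show "\<forall>i<N. wstar i > 0" using wstar(1) om_pos by force
    qed
    moreover have "\<bar>Jfun N \<tau> A ?what - Jfun N \<tau> ?phat ?what\<bar> \<le> ?E"
      by (rule abs_Jfun_diff_le[OF om_pos what total])
    moreover have "\<bar>Jfun N \<tau> A wstar - Jfun N \<tau> ?phat wstar\<bar> \<le> ?E"
      by (rule abs_Jfun_diff_le[OF om_pos wstar(1) total])
    ultimately show "Jfun N \<tau> A ?what \<le> Jfun N \<tau> A wstar + 2 * D2 N \<tau> / \<omega> * (\<zeta> + beta N K A \<epsilon>)"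
      by linarith
  qed
qed

end
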